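(* Fix $\beta\ge1$ and let $\{X_i\}_{i\ge1}$, $W_n$, $\xi$, $\mathcal H$ and $\alpha$ be as in the context, with $\sup_{i\ge1}\mathbb E[|X_i|^{2+\alpha}]<\infty$. Fix $f\in\mathcal H$ and let $\xi_k:=f(W_k)-\mathbb E[f(W_k)]$ and $Z_l:=\sum_{4^{l-1}\le i<4^l}\frac{\xi_i}{i}$. Then there exists a positive constant $M_5$ such that for all $1\le n_1\le n_2$, $$\sum_{l=n_1}^{n_2}\mathbb E[Z_l^2]\le M_5\,(n_2-n_1+1).$$
   Context: Sub-linear expectation space $(\Omega,\mathscr H,\mathbb E)$: $(\Omega,\mathcal F)$ a measurable space, $\mathscr H$ a linear space of real measurable functions closed under $(X_1,\dots,X_n)\mapsto\varphi(X_1,\dots,X_n)$ for $\varphi\in C_{b,Lip}(\mathbb R^n)$ (bounded Lipschitz functions), and $\mathbb E:\mathscr H\to\mathbb R$ monotone, constant preserving, sub-additive and positively homogeneous; it is assumed $\mathbb E[X]=\sup_{P\in\mathcal P}E_P[X]$ for a family $\mathcal P$ of $\sigma$-additive probability measures. $(\widetilde\Omega,\widetilde{\mathscr H},\widetilde{\mathbb E})$ is another sub-linear expectation space. Both satisfy condition (A): for every $X$ and every sequence $f_n\in C_{b,Lip}(\mathbb R)$ with $f_n\downarrow0$, $\mathbb E[f_n(X)]\downarrow0$ (resp. $\widetilde{\mathbb E}[f_n(X)]\downarrow0$). Independence: $Y\in\mathscr H^n$ is independent of $X\in\mathscr H^m$ if $\mathbb E[\varphi(X,Y)]=\mathbb E\big[\mathbb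 E[\varphi(x,Y)]|_{x=X}\big]$ for all $\varphi\in C_{b,Lip}(\mathbb R^{m+n})$; $\{X_n\}$ is independent if $X_{n+1}$ is independent of $(X_1,\dots,X_n)$ for every $n$. Standing setting: $\{X_i\}$ is independent in $(\Omega,\mathscr H,\mathbb E)$ with $\mathbb E[X_i]=\mathbb E[-X_i]=0$, $\overline\sigma_i=\sqrt{\mathbb E[X_i^2]}$, $\underline\sigma_i=\sqrt{-\mathbb E[-X_i^2]}$, $\overline\sigma_i/\underline\sigma_i=\beta$ for all $i$, $0<\inf_i\underline\sigma_i^2\le\sup_i\overline\sigma_i^2<\infty$; $S_n=\sum_{i\le n}X_i$, $\sigma_i=(\underline\sigma_i+\overline\sigma_i)/2$, $B_n=\sqrt{\sum_{i\le n}\sigma_i^2}$, $W_n=S_n/B_n$. $\xi$ is $G$-normal under $\widetilde{\mathbb E}$ (for each $f\in C_{b,Lip}(\mathbb R)$, $u(t,x)=\widetilde{\mathbb E}[f(x+\sqrt t\xi)]$ is the unique viscosity solution of $\partial_tu-G(\partial_{xx}u)=0$, $u(0,\cdot)=f$, with $G(a)=\frac12\widetilde{\mathbb E}[a\xi^2]$), with $\sqrt{\widetilde{\mathbb E}[\xi^2]}=\frac{2\beta}{1+\beta}$, $\sqrt{-\widetilde{\mathbb E}[-\xi^2]}=\frac{2}{1+\beta}$. $\mathcal H:=\{f\in C_{b,Lip}(\mathbb R):\widetilde{\mathbb E}[f(\xi)]=-\widetilde{\mathbb E}[-f(\xi)]\}$. $\alpha\in(0,1)$ is the constant from Song's theorem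 (cited): there exist $\alpha\in(0,1)$ depending on $\beta$ and $C_{\alpha,\beta}>0$ such that for every such sequence and every $n$, $\sup_{|f|_{Lip}\le1}|\mathbb E[f(W_n)]-\widetilde{\mathbb E}[f(\xi)]|\le C_{\alpha,\beta}\sup_{1\le i\le n}\{\frac{\mathbb E[|X_i|^{2+\alpha}]}{\sigma_i^{2+\alpha}}(\frac{\sigma_i}{B_n})^\alpha\}$. *)

theory Defs
  imports "HOL-Probability.Probability"
begin

text \<open>Vectors in R^n are represented as real lists of length n (Euclidean norm).\<close>

definition cblip :: "nat \<Rightarrow> (real list \<Rightarrow> real) \<Rightarrow> bool" where
  "cblip n \<phi> \<longleftrightarrow>
     (\<exists>B. \<forall>x. length x = n \<longrightarrow> \<bar>\<phi> x\<bar> \<le> B) \<and>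
     (\<exists>L. \<forall>x y. length x = n \<longrightarrow> length y = n \<longrightarrow>
          \<bar>\<phi> x - \<phi> y\<bar> \<le> L * sqrt (\<Sum>i<n. (x ! i - y ! i)\<^sup>2))"

definition cbl1 :: "(real \<Rightarrow> real) \<Rightarrow> bool" where
  "cbl1 g \<longleftrightarrow> (\<exists>B. \<forall>x. \<bar>g x\<bar> \<le> B) \<and> (\<exists>L. \<forall>x y. \<bar>g x - g y\<bar> \<le> L * \<bar>x - y\<bar>)"

definition vals :: "('a \<Rightarrow> real) list \<Rightarrow> 'a \<Rightarrow> real list" where
  "vals Xs \<omega> = map (\<lambda>X. X \<omega>) Xs"

definition sublinear_space :: "('a \<Rightarrow> real) set \<Rightarrow> (('a \<Rightarrow> real) \<Rightarrow> real) \<Rightarrow> bool" where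
  "sublinear_space H E \<longleftrightarrow>
     \<comment> \<open>linear space\<close>
     (\<lambda>_. 0) \<in> H \<and>
     (\<forall>X\<in>H. \<forall>Y\<in>H. (\<lambda>\<omega>. X \<omega> + Y \<omega>) \<in> H) \<and>
     (\<forall>X\<in>H. \<forall>c. (\<lambda>\<omega>. c * X \<omega>) \<in> H) \<and>
     \<comment> \<open>closed under bounded Lipschitz compositions\<close>
     (\<forall>Xs \<phi>. set Xs \<subseteq> H \<longrightarrow> cblip (length Xs) \<phi> \<longrightarrow> (\<lambda>\<omega>. \<phi> (vals Xs \<omega>)) \<in> H) \<and>
     \<comment> \<open>monotone, constant preserving, sub-additive, positively homogeneous\<close>
     (\<forall>X\<in>H. \<forall>Y\<in>H. (\<forall>\<omega>. X \<omega> \<le> Y \<omega>) \<longrightarrow> E X \<le> E Y) \<and>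
     (\<forall>c. E (\<lambda>_. c) = c) \<and>
     (\<forall>X\<in>H. \<forall>Y\<in>H. E (\<lambda>\<omega>. X \<omega> + Y \<omega>) \<le> E X + E Y) \<and>
     (\<forall>X\<in>H. \<forall>c\<ge>0. E (\<lambda>\<omega>. c * X \<omega>) = c * E X) \<and>
     \<comment> \<open>measurable structure and representation by sigma-additive probabilities\<close>
     (\<exists>M \<P>. space M = UNIV \<and> \<P> \<noteq> {} \<and>
        (\<forall>P\<in>\<P>. prob_space P \<and> space P = space M \<and> sets P = sets M) \<and>
        (\<forall>X\<in>H. X \<in> borel_measurable M \<and> (\<forall>P\<in>\<P>. integrable P X) \<and>
                E X = (SUP P\<in>\<P>. (\<integral>\<omega>. X \<omega> \<partial>P))))"

definition condA :: "('a \<Rightarrow> real) set \<Rightarrow> (('a \<Rightarrow> real) \<Rightarrow> real) \<Rightarrow> bool" where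
  "condA H E \<longleftrightarrow>
     (\<forall>X\<in>H. \<forall>fs :: nat \<Rightarrow> real \<Rightarrow> real.
        (\<forall>n. cbl1 (fs n)) \<longrightarrow> (\<forall>x. decseq (\<lambda>n. fs n x) \<and> (\<lambda>n. fs n x) \<longlonglongrightarrow> 0) \<longrightarrow>
        decseq (\<lambda>n. E (\<lambda>\<omega>. fs n (X \<omega>))) \<and> (\<lambda>n. E (\<lambda>\<omega>. fs n (X \<omega>))) \<longlonglongrightarrow> 0)"

text \<open>\<open>indep E Xs Ys\<close>: the vector Ys is independent of the vector Xs.\<close>

definition indep :: "(('a \<Rightarrow> real) \<Rightarrow> real) \<Rightarrow> ('a \<Rightarrow> real) list \<Rightarrow> ('a \<Rightarrow> real) list \<Rightarrow> bool" where
  "indep E Xs Ys \<longleftrightarrow>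
     (\<forall>\<phi>. cblip (length Xs + length Ys) \<phi> \<longrightarrow>
        E (\<lambda>\<omega>. \<phi> (vals Xs \<omega> @ vals Ys \<omega>)) =
        E (\<lambda>\<omega>. E (\<lambda>\<omega>'. \<phi> (vals Xs \<omega> @ vals Ys \<omega>'))))"

text \<open>Sequences are indexed from 1.\<close>

definition indep_seq :: "(('a \<Rightarrow> real) \<Rightarrow> real) \<Rightarrow> (nat \<Rightarrow> 'a \<Rightarrow> real) \<Rightarrow> bool" where
  "indep_seq E X \<longleftrightarrow> (\<forall>n\<ge>1. indep E (map X [1..<n+1]) [X (n+1)])"

definition sig_up :: "(('a \<Rightarrow> real) \<Rightarrow> real) \<Rightarrow> (nat \<Rightarrow> 'a \<Rightarrow> real) \<Rightarrow> nat \<Rightarrow> real" where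
  "sig_up E X i = sqrt (E (\<lambda>\<omega>. (X i \<omega>)\<^sup>2))"

definition sig_lo :: "(('a \<Rightarrow> real) \<Rightarrow> real) \<Rightarrow> (nat \<Rightarrow> 'a \<Rightarrow> real) \<Rightarrow> nat \<Rightarrow> real" where
  "sig_lo E X i = sqrt (- E (\<lambda>\<omega>. - (X i \<omega>)\<^sup>2))"

definition sig :: "(('a \<Rightarrow> real) \<Rightarrow> real) \<Rightarrow> (nat \<Rightarrow> 'a \<Rightarrow> real) \<Rightarrow> nat \<Rightarrow> real" where
  "sig E X i = (sig_lo E X i + sig_up E X i) / 2"

definition Bn :: "(('a \<Rightarrow> real) \<Rightarrow> real) \<Rightarrow> (nat \<Rightarrow> 'a \<Rightarrow> real) \<Rightarrow> nat \<Rightarrow> real" where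
  "Bn E X n = sqrt (\<Sum>i=1..n. (sig E X i)\<^sup>2)"

definition Wn :: "(('a \<Rightarrow> real) \<Rightarrow> real) \<Rightarrow> (nat \<Rightarrow> 'a \<Rightarrow> real) \<Rightarrow> nat \<Rightarrow> 'a \<Rightarrow> real" where
  "Wn E X n \<omega> = (\<Sum>i=1..n. X i \<omega>) / Bn E X n"

definition std_seq :: "('a \<Rightarrow> real) set \<Rightarrow> (('a \<Rightarrow> real) \<Rightarrow> real) \<Rightarrow> real \<Rightarrow> (nat \<Rightarrow> 'a \<Rightarrow> real) \<Rightarrow> bool" where
  "std_seq H E \<beta> X \<longleftrightarrow>
     (\<forall>i\<ge>1. X i \<in> H \<and> (\<lambda>\<omega>. (X i \<omega>)\<^sup>2) \<in> H \<and>
            E (X i) = 0 \<and> E (\<lambda>\<omega>. - X i \<omega>) = 0 \<and>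
            sig_up E X i / sig_lo E X i = \<beta>) \<and>
     (\<exists>a b. 0 < a \<and> (\<forall>i\<ge>1. a \<le> (sig_lo E X i)\<^sup>2 \<and> (sig_up E X i)\<^sup>2 \<le> b)) \<and>
     indep_seq E X"

definition G_of :: "(('b \<Rightarrow> real) \<Rightarrow> real) \<Rightarrow> ('b \<Rightarrow> real) \<Rightarrow> real \<Rightarrow> real" where
  "G_of Et \<xi> a = Et (\<lambda>\<omega>. a * (\<xi> \<omega>)\<^sup>2) / 2"

definition test_fn :: "(real \<Rightarrow> real \<Rightarrow> real) \<Rightarrow> (real \<Rightarrow> real \<Rightarrow> real) \<Rightarrow>
    (real \<Rightarrow> real \<Rightarrow> real) \<Rightarrow> (real \<Rightarrow> real \<Rightarrow> real) \<Rightarrow> bool" where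
  "test_fn \<phi> \<phi>t \<phi>x \<phi>xx \<longleftrightarrow>
     continuous_on UNIV (\<lambda>(s, y). \<phi> s y) \<and> continuous_on UNIV (\<lambda>(s, y). \<phi>t s y) \<and>
     continuous_on UNIV (\<lambda>(s, y). \<phi>x s y) \<and> continuous_on UNIV (\<lambda>(s, y). \<phi>xx s y) \<and>
     (\<forall>s y. ((\<lambda>r. \<phi> r y) has_real_derivative \<phi>t s y) (at s) \<and>
            ((\<lambda>z. \<phi> s z) has_real_derivative \<phi>x s y) (at y) \<and>
            ((\<lambda>z. \<phi>x s z) has_real_derivative \<phi>xx s y) (at y))"

definition visc_sub :: "(real \<Rightarrow> real) \<Rightarrow> (real \<Rightarrow> real \<Rightarrow> real) \<Rightarrow> bool" where
  "visc_sub G u \<longleftrightarrow>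
     (\<forall>t x \<phi> \<phi>t \<phi>x \<phi>xx. t > 0 \<and> test_fn \<phi> \<phi>t \<phi>x \<phi>xx \<and> \<phi> t x = u t x \<and>
        (\<forall>s y. s > 0 \<longrightarrow> u s y \<le> \<phi> s y) \<longrightarrow> \<phi>t t x - G (\<phi>xx t x) \<le> 0)"

definition visc_super :: "(real \<Rightarrow> real) \<Rightarrow> (real \<Rightarrow> real \<Rightarrow> real) \<Rightarrow> bool" where
  "visc_super G u \<longleftrightarrow>
     (\<forall>t x \<phi> \<phi>t \<phi>x \<phi>xx. t > 0 \<and> test_fn \<phi> \<phi>t \<phi>x \<phi>xx \<and> \<phi> t x = u t x \<and>
        (\<forall>s y. s > 0 \<longrightarrow> \<phi> s y \<le> u s y) \<longrightarrow> \<phi>t t x - G (\<phi>xx t x) \<ge> 0)"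

definition visc_sol :: "(real \<Rightarrow> real) \<Rightarrow> (real \<Rightarrow> real \<Rightarrow> real) \<Rightarrow> bool" where
  "visc_sol G u \<longleftrightarrow>
     continuous_on ({0..} \<times> UNIV) (\<lambda>(t, x). u t x) \<and> visc_sub G u \<and> visc_super G u"

definition G_normal :: "(('b \<Rightarrow> real) \<Rightarrow> real) \<Rightarrow> ('b \<Rightarrow> real) \<Rightarrow> bool" where
  "G_normal Et \<xi> \<longleftrightarrow>
     (\<forall>f. cbl1 f \<longrightarrow>
        (let u = (\<lambda>t x. Et (\<lambda>\<omega>. f (x + sqrt t * \<xi> \<omega>))) in
          visc_sol (G_of Et \<xi>) u \<and> (\<forall>x. u 0 x = f x) \<and>
          (\<forall>v. visc_sol (G_of Et \<xi>) v \<and> (\<forall>x. v 0 x = f x) \<and>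
               (\<exists>B. \<forall>t\<ge>0. \<forall>x. \<bar>v t x\<bar> \<le> B) \<longrightarrow>
               (\<forall>t\<ge>0. \<forall>x. v t x = u t x))))"

definition calH :: "(('b \<Rightarrow> real) \<Rightarrow> real) \<Rightarrow> ('b \<Rightarrow> real) \<Rightarrow> (real \<Rightarrow> real) set" where
  "calH Et \<xi> = {f. cbl1 f \<and> Et (\<lambda>\<omega>. f (\<xi> \<omega>)) = - Et (\<lambda>\<omega>. - f (\<xi> \<omega>))}"

section \<open>Song's Berry-Esseen bound (cited theorem) as a property of alpha\<close>

definition Song_bound :: "('a \<Rightarrow> real) set \<Rightarrow> (('a \<Rightarrow> real) \<Rightarrow> real) \<Rightarrow>
    (('b \<Rightarrow> real) \<Rightarrow> real) \<Rightarrow> ('b \<Rightarrow> real) \<Rightarrow> real \<Rightarrow> real \<Rightarrow> bool" where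
  "Song_bound H E Et \<xi> \<beta> \<alpha> \<longleftrightarrow>
     0 < \<alpha> \<and> \<alpha> < 1 \<and>
     (\<exists>C>0. \<forall>Y. std_seq H E \<beta> Y \<and> (\<forall>i\<ge>1. (\<lambda>\<omega>. \<bar>Y i \<omega>\<bar> powr (2 + \<alpha>)) \<in> H) \<longrightarrow>
        (\<forall>n\<ge>1. \<forall>g. cbl1 g \<and> (\<forall>x y. \<bar>g x - g y\<bar> \<le> \<bar>x - y\<bar>) \<longrightarrow>
           \<bar>E (\<lambda>\<omega>. g (Wn E Y n \<omega>)) - Et (\<lambda>\<omega>. g (\<xi> \<omega>))\<bar> \<le>
           C * (MAX i\<in>{1..n}. E (\<lambda>\<omega>. \<bar>Y i \<omega>\<bar> powr (2 + \<alpha>)) / sig E Y i powr (2 + \<alpha>)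
                              * (sig E Y i / Bn E Y n) powr \<alpha>)))"

end

theory Submission
  imports Defs
begin

text \<open>Since \<open>f\<close> is bounded, say by \<open>B\<close>, each centred term \<open>\<xi>\<^sub>i\<close> is bounded by \<open>2B\<close>, and
  the block \<open>Z\<^sub>l\<close> has \<open>3 \<cdot> 4\<^bsup>l-1\<^esup>\<close> terms with \<open>i \<ge> 4\<^bsup>l-1\<^esup>\<close>, so \<open>|Z\<^sub>l| \<le> 6B\<close>
  pointwise. Monotonicity and constant preservation of the sub-linear expectation then give
  \<open>\<bbbE>[Z\<^sub>l\<^sup>2] \<le> 36B\<^sup>2\<close> for every block, so \<open>M\<^sub>5 = 36B\<^sup>2 + 1\<close> works.\<close>

lemma cbl1_clipped_square:
  assumes "K \<ge> 0"
  shows "cbl1 (\<lambda>x::real. (max (-K) (min K x))\<^sup>2)"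
  unfolding cbl1_def
proof (intro conjI exI allI)
  fix x :: real
  have "\<bar>max (-K) (min K x)\<bar> \<le> K" using assms by auto
  then have "\<bar>max (-K) (min K x)\<bar>\<^sup>2 \<le> K\<^sup>2" by (rule power_mono) simp
  then show "\<bar>(max (-K) (min K x))\<^sup>2\<bar> \<le> K\<^sup>2" by simp
next
  fix x y :: real
  let ?a = "max (-K) (min K x)" and ?b = "max (-K) (min K y)"
  have diff: "\<bar>?a - ?b\<bar> \<le> \<bar>x - y\<bar>" by (auto simp: max_def min_def)
  have sum: "\<bar>?a + ?b\<bar> \<le> 2 * K" using assms by (auto simp: max_def min_def)
  have "?a\<^sup>2 - ?b\<^sup>2 = (?a - ?b) * (?a + ?b)"
    by (simp add: power2_eq_square algebra_simps)
  then have "\<bar>?a\<^sup>2 - ?b\<^sup>2\<bar> = \<bar>?a - ?b\<bar> * \<bar>?a + ?b\<bar>"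
    by (simp add: abs_mult)
  also have "\<dots> \<le> \<bar>x - y\<bar> * (2 * K)" by (rule mult_mono[OF diff sum]) auto
  finally show "\<bar>?a\<^sup>2 - ?b\<^sup>2\<bar> \<le> 2 * K * \<bar>x - y\<bar>" by (simp add: mult.commute)
qed

lemma abs_sum_reciprocal_block_le:
  fixes c :: "nat \<Rightarrow> real"
  assumes "a \<ge> 1" and bound: "\<And>i. \<bar>c i\<bar> \<le> C"
  shows "\<bar>\<Sum>i\<in>{a..<b}. c i / real i\<bar> \<le> real (b - a) * C / real a"
proof -
  have "\<bar>\<Sum>i\<in>{a..<b}. c i / real i\<bar> \<le> (\<Sum>i\<in>{a..<b}. \<bar>c i\<bar> / real i)"
    using sum_abs[of "\<lambda>i. c i / real i"] by simp
  also have "\<dots> \<le> (\<Sum>i\<in>{a..<b}. C / real a)"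
  proof (rule sum_mono)
    fix i assume "i \<in> {a..<b}"
    then have "real a \<le> real i" "real a > 0" using \<open>a \<ge> 1\<close> by auto
    moreover have "0 \<le> C" using bound[of 0] by linarith
    ultimately show "\<bar>c i\<bar> / real i \<le> C / real a"
      using bound[of i] by (meson frac_le abs_ge_zero)
  qed
  finally show ?thesis by simp
qed

lemma sublinear_spaceD:
  assumes "sublinear_space H E"
  shows "\<forall>Xs \<phi>. set Xs \<subseteq> H \<longrightarrow> cblip (length Xs) \<phi> \<longrightarrow> (\<lambda>\<omega>. \<phi> (vals Xs \<omega>)) \<in> H"
    and "\<forall>X\<in>H. \<forall>Y\<in>H. (\<lambda>\<omega>. X \<omega> + Y \<omega>) \<in> H"
    and "\<forall>X\<in>H. \<forall>c. (\<lambda>\<omega>. c * X \<omega>) \<in> H"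
    and "\<forall>X\<in>H. \<forall>Y\<in>H. (\<forall>\<omega>. X \<omega> \<le> Y \<omega>) \<longrightarrow> E X \<le> E Y"
    and "\<forall>c. E (\<lambda>_. c) = c"
  using assms unfolding sublinear_space_def by - (elim conjE, assumption)+

context
  fixes H :: "('a \<Rightarrow> real) set" and E :: "('a \<Rightarrow> real) \<Rightarrow> real"
  assumes space: "sublinear_space H E"
begin

lemma sublinear_space_cblip_mem:
  "set Xs \<subseteq> H \<Longrightarrow> cblip (length Xs) \<phi> \<Longrightarrow> (\<lambda>\<omega>. \<phi> (vals Xs \<omega>)) \<in> H"
  using sublinear_spaceD(1)[OF space] by blast

lemma sublinear_space_const_mem: "(\<lambda>_. c) \<in> H"
proof -
  have "cblip (length ([] :: ('a \<Rightarrow> real) list)) (\<lambda>_. c)"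
    unfolding cblip_def by (auto intro: exI[of _ "\<bar>c\<bar>"] exI[of _ 0])
  from sublinear_space_cblip_mem[OF _ this] show ?thesis by simp
qed

lemma sublinear_space_add_mem: "X \<in> H \<Longrightarrow> Y \<in> H \<Longrightarrow> (\<lambda>\<omega>. X \<omega> + Y \<omega>) \<in> H"
  using sublinear_spaceD(2)[OF space] by blast

lemma sublinear_space_scale_mem: "X \<in> H \<Longrightarrow> (\<lambda>\<omega>. c * X \<omega>) \<in> H"
  using sublinear_spaceD(3)[OF space] by blast

lemma sublinear_space_mono: "X \<in> H \<Longrightarrow> Y \<in> H \<Longrightarrow> (\<And>\<omega>. X \<omega> \<le> Y \<omega>) \<Longrightarrow> E X \<le> E Y"
  using sublinear_spaceD(4)[OF space] by blast

lemma sublinear_space_const: "E (\<lambda>_. c) = c"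
  using sublinear_spaceD(5)[OF space] by blast

lemma sublinear_space_sum_mem:
  assumes "finite S" "\<And>i. i \<in> S \<Longrightarrow> F i \<in> H"
  shows "(\<lambda>\<omega>. \<Sum>i\<in>S. F i \<omega>) \<in> H"
  using assms
proof (induction S rule: finite_induct)
  case empty
  show ?case using sublinear_space_const_mem[of 0] by simp
next
  case (insert x S)
  then show ?case using sublinear_space_add_mem[of "F x"] by simp
qed

lemma sublinear_space_comp_mem:
  assumes "cbl1 g" "X \<in> H"
  shows "(\<lambda>\<omega>. g (X \<omega>)) \<in> H"
proof -
  obtain B L where B: "\<forall>x. \<bar>g x\<bar> \<le> B" and L: "\<forall>x y. \<bar>g x - g y\<bar> \<le> L * \<bar>x - y\<bar>"
    using assms(1) unfolding cbl1_def by blast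
  have "cblip (length [X]) (\<lambda>xs. g (hd xs))"
    unfolding cblip_def
  proof (intro conjI exI allI impI)
    fix x :: "real list" show "\<bar>g (hd x)\<bar> \<le> B" using B by blast
  next
    fix x y :: "real list" assume "length x = length [X]" "length y = length [X]"
    then obtain a b where "x = [a]" "y = [b]" by (cases x; cases y) auto
    then show "\<bar>g (hd x) - g (hd y)\<bar> \<le> L * sqrt (\<Sum>i<length [X]. (x ! i - y ! i)\<^sup>2)"
      using L by simp
  qed
  from sublinear_space_cblip_mem[OF _ this] assms(2) show ?thesis by (simp add: vals_def)
qed

lemma sublinear_space_abs_le:
  assumes "X \<in> H" "\<And>\<omega>. \<bar>X \<omega>\<bar> \<le> B"
  shows "\<bar>E X\<bar> \<le> B"
proof -
  have bounds: "- B \<le> X \<omega>" "X \<omega> \<le> B" for \<omega>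
    using assms(2)[of \<omega>] by linarith+
  have "E X \<le> E (\<lambda>_. B)"
    using assms(1) bounds by (intro sublinear_space_mono sublinear_space_const_mem)
  moreover have "E (\<lambda>_. -B) \<le> E X"
    using assms(1) bounds by (intro sublinear_space_mono sublinear_space_const_mem)
  ultimately show ?thesis by (simp add: sublinear_space_const abs_le_iff)
qed

text \<open>\<open>H\<close> is only closed under bounded Lipschitz maps, so \<open>X\<^sup>2\<close> is reached as the square
  clipped at the bound of \<open>X\<close>.\<close>

lemma sublinear_space_square_le:
  assumes "X \<in> H" and bound: "\<And>\<omega>. \<bar>X \<omega>\<bar> \<le> K"
  shows "E (\<lambda>\<omega>. (X \<omega>)\<^sup>2) \<le> K\<^sup>2"
proof -
  have "K \<ge> 0" using bound[of undefined] by linarith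
  let ?clip = "\<lambda>x. (max (-K) (min K x))\<^sup>2"
  have clipped: "(\<lambda>\<omega>. (X \<omega>)\<^sup>2) = (\<lambda>\<omega>. ?clip (X \<omega>))"
  proof
    fix \<omega> show "(X \<omega>)\<^sup>2 = ?clip (X \<omega>)" using bound[of \<omega>] by (auto simp: abs_le_iff)
  qed
  have "(\<lambda>\<omega>. (X \<omega>)\<^sup>2) \<in> H"
    unfolding clipped by (rule sublinear_space_comp_mem[OF cbl1_clipped_square[OF \<open>K \<ge> 0\<close>] assms(1)])
  moreover have "\<bar>(X \<omega>)\<^sup>2\<bar> \<le> K\<^sup>2" for \<omega>
    using power_mono[OF bound[of \<omega>], of 2] by simp
  ultimately have "\<bar>E (\<lambda>\<omega>. (X \<omega>)\<^sup>2)\<bar> \<le> K\<^sup>2"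
    by (rule sublinear_space_abs_le)
  then show ?thesis by simp
qed

lemma sublinear_space_centred_block_square_le:
  assumes mem: "\<And>i. Y i \<in> H" and bound: "\<And>i \<omega>. \<bar>Y i \<omega>\<bar> \<le> C" and "a \<ge> 1"
  shows "E (\<lambda>\<omega>. (\<Sum>i\<in>{a..<b}. (Y i \<omega> - E (Y i)) / real i)\<^sup>2) \<le> (real (b - a) * (2 * C) / real a)\<^sup>2"
proof (rule sublinear_space_square_le)
  have "(\<lambda>\<omega>. (1 / real i) * (Y i \<omega> + - E (Y i))) \<in> H" for i
    by (intro sublinear_space_scale_mem sublinear_space_add_mem mem sublinear_space_const_mem)
  then have "(\<lambda>\<omega>. (Y i \<omega> - E (Y i)) / real i) \<in> H" for i
    by simp
  then show "(\<lambda>\<omega>. \<Sum>i\<in>{a..<b}. (Y i \<omega> - E (Y i)) / real i) \<in> H"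
    by (intro sublinear_space_sum_mem) simp_all
  have "\<bar>Y i \<omega> - E (Y i)\<bar> \<le> 2 * C" for i \<omega>
    using bound[of i \<omega>] sublinear_space_abs_le[OF mem[of i] bound] by linarith
  then show "\<bar>\<Sum>i\<in>{a..<b}. (Y i \<omega> - E (Y i)) / real i\<bar> \<le> real (b - a) * (2 * C) / real a" for \<omega>
    by (rule abs_sum_reciprocal_block_le[OF \<open>a \<ge> 1\<close>])
qed

lemma Wn_mem:
  assumes "\<And>j. j \<ge> 1 \<Longrightarrow> X j \<in> H"
  shows "Wn E X n \<in> H"
proof -
  have "(\<lambda>\<omega>. \<Sum>j\<in>{1..n}. X j \<omega>) \<in> H"
    using assms by (intro sublinear_space_sum_mem) auto
  then have "(\<lambda>\<omega>. (1 / Bn E X n) * (\<Sum>j\<in>{1..n}. X j \<omega>)) \<in> H"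
    by (rule sublinear_space_scale_mem)
  then show ?thesis by (simp add: Wn_def[abs_def])
qed

end

theorem lemma4p4:
  fixes H :: "('a \<Rightarrow> real) set" and E :: "('a \<Rightarrow> real) \<Rightarrow> real"
    and Ht :: "('b \<Rightarrow> real) set" and Et :: "('b \<Rightarrow> real) \<Rightarrow> real"
    and X :: "nat \<Rightarrow> 'a \<Rightarrow> real" and \<xi> :: "'b \<Rightarrow> real"
    and \<beta> \<alpha> :: real and f :: "real \<Rightarrow> real"
  assumes space: "sublinear_space H E" "condA H E"
    and space_t: "sublinear_space Ht Et" "condA Ht Et"
    and beta: "\<beta> \<ge> 1"
    and seq: "std_seq H E \<beta> X"
    and xi: "\<xi> \<in> Ht" "(\<lambda>\<omega>. (\<xi> \<omega>)\<^sup>2) \<in> Ht" "G_normal Et \<xi>"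
      "sqrt (Et (\<lambda>\<omega>. (\<xi> \<omega>)\<^sup>2)) = 2 * \<beta> / (1 + \<beta>)"
      "sqrt (- Et (\<lambda>\<omega>. - (\<xi> \<omega>)\<^sup>2)) = 2 / (1 + \<beta>)"
    and song: "Song_bound H E Et \<xi> \<beta> \<alpha>"
    and moments: "\<forall>i\<ge>1. (\<lambda>\<omega>. \<bar>X i \<omega>\<bar> powr (2 + \<alpha>)) \<in> H"
      "\<exists>K. \<forall>i\<ge>1. E (\<lambda>\<omega>. \<bar>X i \<omega>\<bar> powr (2 + \<alpha>)) \<le> K"
    and f: "f \<in> calH Et \<xi>"
  shows "\<exists>M5>0. \<forall>n1 n2. 1 \<le> n1 \<and> n1 \<le> n2 \<longrightarrow>
           (\<Sum>l=n1..n2. E (\<lambda>\<omega>. (\<Sum>i\<in>{4^(l-1)..<4^l}.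
               (f (Wn E X i \<omega>) - E (\<lambda>\<omega>'. f (Wn E X i \<omega>'))) / real i)\<^sup>2))
           \<le> M5 * real (n2 - n1 + 1)"
proof -
  obtain B where fB: "\<And>x. \<bar>f x\<bar> \<le> B" and "cbl1 f"
    using f unfolding calH_def cbl1_def by blast
  have "X j \<in> H" if "j \<ge> 1" for j
    using seq that unfolding std_seq_def by blast
  then have FH: "(\<lambda>\<omega>. f (Wn E X i \<omega>)) \<in> H" for i
    by (intro sublinear_space_comp_mem[OF space(1) \<open>cbl1 f\<close>] Wn_mem[OF space(1)])
  have block: "E (\<lambda>\<omega>. (\<Sum>i\<in>{4^(l-1)..<4^l}.
      (f (Wn E X i \<omega>) - E (\<lambda>\<omega>'. f (Wn E X i \<omega>'))) / real i)\<^sup>2) \<le> (6 * B)\<^sup>2"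
    if "l \<ge> 1" for l :: nat
  proof -
    have "(4::nat)^l - 4^(l-1) = 3 * 4^(l-1)"
      using that by (cases l) simp_all
    then show ?thesis
      using sublinear_space_centred_block_square_le[OF space(1),
          where Y = "\<lambda>i \<omega>. f (Wn E X i \<omega>)" and a = "4^(l-1)" and b = "4^l", OF FH fB]
      by simp
  qed
  show ?thesis
  proof (intro exI[of _ "(6 * B)\<^sup>2 + 1"] conjI allI impI)
    fix n1 n2 :: nat assume n: "1 \<le> n1 \<and> n1 \<le> n2"
    have "(\<Sum>l=n1..n2. E (\<lambda>\<omega>. (\<Sum>i\<in>{4^(l-1)..<4^l}.
               (f (Wn E X i \<omega>) - E (\<lambda>\<omega>'. f (Wn E X i \<omega>'))) / real i)\<^sup>2))
          \<le> real (card {n1..n2}) * ((6 * B)\<^sup>2 + 1)"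
      by (rule sum_bounded_above, rule order_trans[OF block]) (use n in auto)
    then show "(\<Sum>l=n1..n2. E (\<lambda>\<omega>. (\<Sum>i\<in>{4^(l-1)..<4^l}.
               (f (Wn E X i \<omega>) - E (\<lambda>\<omega>'. f (Wn E X i \<omega>'))) / real i)\<^sup>2))
           \<le> ((6 * B)\<^sup>2 + 1) * real (n2 - n1 + 1)"
      using n by (simp add: Suc_diff_le mult.commute)
  qed (simp add: add_nonneg_pos)
qed

end
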